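(* Let $h\in H$ and let $P^+_h(\mathbf t_{\mathcal N})=\sum_{\beta\in\mathcal B_h}p_\beta\mathbf t_{\mathcal N}^\beta$ be the quotient in the decomposition $f_h=P^+_h+f^{neg}_h$ (with $P^+_h$ a finite sum of monomials with exponents $\beta\not<0$ and $f^{neg}_h$ of negative degree in every $t_n$). Then the polynomial part satisfies $$P_h(\mathbf t_{\mathcal N})=\sum_{\beta\in\mathcal B_h}\mathfrak s(\beta)\,p_\beta\,\mathbf t_{\mathcal N}^{\beta}.$$
   Context: Let $\Gamma$ be a connected plumbing graph which is a tree, all of whose vertices have genus $0$ and an integer decoration $e_v$, such that the intersection matrix $I$ ($I_{vv}=e_v$, $I_{vw}=1$ if $v,w$ are adjacent, $0$ otherwise) is negative definite. Let $\mathcal V$ be its vertex set, $\delta_v$ the valency of $v$, and $\mathcal N=\{v:\delta_v\ge 3\}$ the set of nodes (assumed nonempty). Let $L=\bigoplus_v\mathbb Z E_v$ with the form given by $I$, $L'=\{l'\in L\otimes\mathbb Q:(l',E_v)\in\mathbb Z\ \forall v\}$ with basis $E_v^*$ defined by $(E_v^*,E_w)=-\delta_{vw}$, $H=L'/L$ and $[l']$ the class of $l'$. For $l'=\sum l_vE_v\in L\otimes\mathbb Q$ put $\mathbf t^{l'}=\prod_v t_v^{l_v}$. The zeta-function is $f(\mathbf t)=\prod_{v}(1-\mathbf t^{E_v^*})^{\delta_v-2}$; let $Z(\mathbf t)=\sum_{l'\in L'}p_{l'}\mathbf t^{l'}$ be its Taylor expansion at the origin, $Z_h=\sum_{[l']=h}p_{l'}\mathbf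 t^{l'}$, and $f_h(\mathbf t)$ the rational function whose expansion is $Z_h$. Let $\pi_{\mathcal N}$ be the projection of $L\otimes\mathbb Q$ onto $\bigoplus_{n\in\mathcal N}\mathbb QE_n$ forgetting non-node coordinates, and $\mathbf t_{\mathcal N}^x:=\prod_{n\in\mathcal N}t_n^{x_n}$ with $x_n$ the coordinates of $\pi_{\mathcal N}(x)$. The reduced zeta-function is $f_h(\mathbf t_{\mathcal N}):=f_h(\mathbf t)|_{t_v=1,\,v\notin\mathcal N}$; it can be written as $\mathbf t_{\mathcal N}^{r_h}\sum_\ell b_\ell\mathbf t_{\mathcal N}^{\ell}/A(\mathbf t_{\mathcal N})$, $A=\prod_{n\in\mathcal N}(1-\mathbf t_{\mathcal N}^{a_n})$, $a_n=\lambda_n\pi_{\mathcal N}(E_n^* )$, $\lambda_n>0$ (all coordinates of $a_n$ positive). A rational function $R/A$ ($R$ a finite sum of monomials with rational exponents) has negative degree in $t_n$ if every monomial of $R$ has $t_n$-exponent smaller than the $t_n$-exponent of $\mathbf t_{\mathcal N}^{\sum a_{n'}}$. For $\beta=\sum_{n\in\mathcal N}\beta_nE_n$, $\beta<0$ means all $\beta_n<0$. Orbifold graph $\Gamma^{orb}$: vertex set $\mathcal N$, with $n,n'$ joined by an edge iff the path in $\Gamma$ between them has all interior vertices of valency $2$; $\delta_{n,\mathcal N}$ denotes the valency of $n$ in $\Gamma^{orb}$ (a tree). For $n\in\mathcal N$, $P^n_h$ is the unique finite sum of monomials in $\mathbf t_{\mathcal N}$, each with $t_n$-exponent $\ge0$,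 such that $f_h-P^n_h$ (written over $A$) has negative degree in $t_n$ (one-variable polynomial part in $t_n$, other variables as coefficients). For an edge $nn'$ of $\Gamma^{orb}$, $P^{n,n'}_h$ is the unique finite sum of monomials each having $t_n$-exponent $\ge0$ or $t_{n'}$-exponent $\ge0$, such that $f_h-P^{n,n'}_h$ has negative degree in both $t_n$ and $t_{n'}$. The polynomial part is $P_h=\sum_{\text{edges } nn' \text{ of }\Gamma^{orb}}P^{n,n'}_h-\sum_{n\in\mathcal N}(\delta_{n,\mathcal N}-1)P^n_h$. Multiplicity: choose $n_0\in\mathcal N$, orient the edges of $\Gamma^{orb}$ towards $n_0$, and write $n>n'$ if there is an edge oriented from $n$ to $n'$. For $\beta$, let $\mathfrak s_n(\beta)=1$ if $\beta_n\ge0$ and $0$ otherwise; for $n>n'$ let $\mathfrak s_{n>n'}(\beta)=1$ if $\beta_n\ge0$ and $\beta_{n'}<0$, and $0$ otherwise. Set $\mathfrak s(\beta)=\mathfrak s_{n_0}(\beta)+\sum_{n>n'}\mathfrak s_{n>n'}(\beta)$ (this does not depend on $n_0$). *)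

theory Defs
  imports Complex_Main
begin

text \<open>The graph is given by a symmetric irreflexive adjacency relation adj on the
finite type 'v of vertices; e v is the Euler decoration of v (all genera are 0).\<close>

definition valency :: "('v::finite \<Rightarrow> 'v \<Rightarrow> bool) \<Rightarrow> 'v \<Rightarrow> nat" where
  "valency adj v = card {w. adj v w}"

definition graph_edges :: "('v \<Rightarrow> 'v \<Rightarrow> bool) \<Rightarrow> 'v set set" where
  "graph_edges adj = {{u, w} | u w. adj u w}"

definition is_tree :: "('v::finite \<Rightarrow> 'v \<Rightarrow> bool) \<Rightarrow> bool" where
  "is_tree adj \<longleftrightarrow> (\<forall>u w. adj u w \<longrightarrow> adj w u) \<and> (\<forall>u. \<not> adj u u)
     \<and> (\<forall>u w. adj\<^sup>*\<^sup>* u w) \<and> card (graph_edges adj) + 1 = card (UNIV :: 'v set)"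

definition inter_mat :: "('v \<Rightarrow> 'v \<Rightarrow> bool) \<Rightarrow> ('v \<Rightarrow> int) \<Rightarrow> 'v \<Rightarrow> 'v \<Rightarrow> int" where
  "inter_mat adj e v w = (if v = w then e v else if adj v w then 1 else 0)"

definition neg_definite :: "('v::finite \<Rightarrow> 'v \<Rightarrow> int) \<Rightarrow> bool" where
  "neg_definite I \<longleftrightarrow> (\<forall>x :: 'v \<Rightarrow> real. (\<exists>v. x v \<noteq> 0) \<longrightarrow>
      (\<Sum>v\<in>UNIV. \<Sum>w\<in>UNIV. x v * of_int (I v w) * x w) < 0)"

text \<open>Elements of L \<otimes> Q are functions 'v \<Rightarrow> rat (coordinates w.r.t. the E_v).
The form (l, E_w).\<close>
definition form_E :: "('v::finite \<Rightarrow> 'v \<Rightarrow> int) \<Rightarrow> ('v \<Rightarrow> rat) \<Rightarrow> 'v \<Rightarrow> rat" where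
  "form_E I l w = (\<Sum>u\<in>UNIV. l u * of_int (I u w))"

definition Estar :: "('v::finite \<Rightarrow> 'v \<Rightarrow> int) \<Rightarrow> 'v \<Rightarrow> ('v \<Rightarrow> rat)" where
  "Estar I v = (THE x. \<forall>w. form_E I x w = (if v = w then -1 else 0))"

definition in_Ldual :: "('v::finite \<Rightarrow> 'v \<Rightarrow> int) \<Rightarrow> ('v \<Rightarrow> rat) \<Rightarrow> bool" where
  "in_Ldual I l \<longleftrightarrow> (\<forall>w. form_E I l w \<in> \<int>)"

definition in_L :: "('v \<Rightarrow> rat) \<Rightarrow> bool" where
  "in_L l \<longleftrightarrow> (\<forall>v. l v \<in> \<int>)"

text \<open>[l] = [h0] in H = L'/L.\<close>
definition same_class :: "('v \<Rightarrow> rat) \<Rightarrow> ('v \<Rightarrow> rat) \<Rightarrow> bool" where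
  "same_class l h0 \<longleftrightarrow> in_L (\<lambda>v. l v - h0 v)"

text \<open>Coefficient of x^k in the Taylor expansion of (1 - x)^(delta - 2).\<close>
definition zfac_coeff :: "nat \<Rightarrow> nat \<Rightarrow> int" where
  "zfac_coeff \<delta> k =
     (if \<delta> \<ge> 2 then (-1) ^ k * int ((\<delta> - 2) choose k)
      else if \<delta> = 1 then 1 else int k + 1)"

definition lin_comb :: "('v::finite \<Rightarrow> 'v \<Rightarrow> int) \<Rightarrow> ('v \<Rightarrow> nat) \<Rightarrow> ('v \<Rightarrow> rat)" where
  "lin_comb I k = (\<lambda>u. \<Sum>v\<in>UNIV. of_nat (k v) * Estar I v u)"

text \<open>p_{l'}: coefficient of t^{l'} in the expansion of
  f(t) = prod_v (1 - t^{E_v^*})^(delta_v - 2).\<close>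
definition zeta_coeff :: "('v::finite \<Rightarrow> 'v \<Rightarrow> bool) \<Rightarrow> ('v \<Rightarrow> int) \<Rightarrow> ('v \<Rightarrow> rat) \<Rightarrow> int" where
  "zeta_coeff adj e l =
     (\<Sum>k\<in>{k. lin_comb (inter_mat adj e) k = l}. \<Prod>v\<in>UNIV. zfac_coeff (valency adj v) (k v))"

definition nodes :: "('v::finite \<Rightarrow> 'v \<Rightarrow> bool) \<Rightarrow> 'v set" where
  "nodes adj = {v. valency adj v \<ge> 3}"

definition proj_N :: "'v set \<Rightarrow> ('v \<Rightarrow> rat) \<Rightarrow> ('v \<Rightarrow> rat)" where
  "proj_N N x = (\<lambda>v. if v \<in> N then x v else 0)"

text \<open>Coefficient of t_N^x in the reduced series Z_h(t)|_{t_v = 1, v not a node},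
  i.e. the Taylor expansion of the reduced zeta function f_h(t_N);
  h is represented by h0 \<in> L'.\<close>
definition Zred :: "('v::finite \<Rightarrow> 'v \<Rightarrow> bool) \<Rightarrow> ('v \<Rightarrow> int) \<Rightarrow> ('v \<Rightarrow> rat) \<Rightarrow> ('v \<Rightarrow> rat) \<Rightarrow> int" where
  "Zred adj e h0 x =
     (\<Sum>l\<in>{l. in_Ldual (inter_mat adj e) l \<and> same_class l h0 \<and> zeta_coeff adj e l \<noteq> 0
              \<and> proj_N (nodes adj) l = x}. zeta_coeff adj e l)"

text \<open>A (generalized) series is a coefficient function ('v \<Rightarrow> rat) \<Rightarrow> int;
 it is a finite sum of monomials if its support is finite.\<close>
definition gsupp :: "(('v \<Rightarrow> rat) \<Rightarrow> int) \<Rightarrow> ('v \<Rightarrow> rat) set" where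
  "gsupp P = {x. P x \<noteq> 0}"

definition gmult :: "(('v \<Rightarrow> rat) \<Rightarrow> int) \<Rightarrow> (('v \<Rightarrow> rat) \<Rightarrow> int) \<Rightarrow> ('v \<Rightarrow> rat) \<Rightarrow> int" where
  "gmult P Q x = (\<Sum>y\<in>gsupp P. P y * Q (\<lambda>v. x v - y v))"

definition in_tN :: "'v set \<Rightarrow> (('v \<Rightarrow> rat) \<Rightarrow> int) \<Rightarrow> bool" where
  "in_tN N P \<longleftrightarrow> finite (gsupp P) \<and> (\<forall>x\<in>gsupp P. \<forall>v. v \<notin> N \<longrightarrow> x v = 0)"

definition avec :: "('v::finite \<Rightarrow> 'v \<Rightarrow> bool) \<Rightarrow> ('v \<Rightarrow> int) \<Rightarrow> ('v \<Rightarrow> rat) \<Rightarrow> 'v \<Rightarrow> ('v \<Rightarrow> rat)" where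
  "avec adj e lam n = (\<lambda>u. lam n * proj_N (nodes adj) (Estar (inter_mat adj e) n) u)"

text \<open>A(t_N) = prod_{n \<in> N} (1 - t_N^{a_n}), expanded.\<close>
definition Apoly :: "('v::finite \<Rightarrow> 'v \<Rightarrow> bool) \<Rightarrow> ('v \<Rightarrow> int) \<Rightarrow> ('v \<Rightarrow> rat) \<Rightarrow> ('v \<Rightarrow> rat) \<Rightarrow> int" where
  "Apoly adj e lam x =
     (\<Sum>S\<in>{S. S \<subseteq> nodes adj \<and> (\<lambda>u. \<Sum>n\<in>S. avec adj e lam n u) = x}. (-1) ^ card S)"

text \<open>R/A has negative degree in t_n.\<close>
definition neg_deg :: "('v::finite \<Rightarrow> 'v \<Rightarrow> bool) \<Rightarrow> ('v \<Rightarrow> int) \<Rightarrow> ('v \<Rightarrow> rat) \<Rightarrow> (('v \<Rightarrow> rat) \<Rightarrow> int) \<Rightarrow> 'v \<Rightarrow> bool" where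
  "neg_deg adj e lam R n \<longleftrightarrow>
     (\<forall>x\<in>gsupp R. x n < (\<Sum>m\<in>nodes adj. avec adj e lam m n))"

text \<open>Numerator of f_h - P written over A, where f_h(t_N) = R/A.\<close>
definition num_minus :: "('v::finite \<Rightarrow> 'v \<Rightarrow> bool) \<Rightarrow> ('v \<Rightarrow> int) \<Rightarrow> ('v \<Rightarrow> rat) \<Rightarrow> (('v \<Rightarrow> rat) \<Rightarrow> int) \<Rightarrow> (('v \<Rightarrow> rat) \<Rightarrow> int) \<Rightarrow> ('v \<Rightarrow> rat) \<Rightarrow> int" where
  "num_minus adj e lam R P x = R x - gmult (Apoly adj e lam) P x"

definition Pn :: "('v::finite \<Rightarrow> 'v \<Rightarrow> bool) \<Rightarrow> ('v \<Rightarrow> int) \<Rightarrow> ('v \<Rightarrow> rat) \<Rightarrow> (('v \<Rightarrow> rat) \<Rightarrow> int) \<Rightarrow> 'v \<Rightarrow> ('v \<Rightarrow> rat) \<Rightarrow> int" where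
  "Pn adj e lam R n = (THE P. in_tN (nodes adj) P \<and> (\<forall>x\<in>gsupp P. x n \<ge> 0)
      \<and> neg_deg adj e lam (num_minus adj e lam R P) n)"

definition Pedge :: "('v::finite \<Rightarrow> 'v \<Rightarrow> bool) \<Rightarrow> ('v \<Rightarrow> int) \<Rightarrow> ('v \<Rightarrow> rat) \<Rightarrow> (('v \<Rightarrow> rat) \<Rightarrow> int) \<Rightarrow> 'v set \<Rightarrow> ('v \<Rightarrow> rat) \<Rightarrow> int" where
  "Pedge adj e lam R ed = (THE P. in_tN (nodes adj) P \<and> (\<forall>x\<in>gsupp P. \<exists>n\<in>ed. x n \<ge> 0)
      \<and> (\<forall>n\<in>ed. neg_deg adj e lam (num_minus adj e lam R P) n))"

definition spath :: "('v \<Rightarrow> 'v \<Rightarrow> bool) \<Rightarrow> 'v list \<Rightarrow> bool" where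
  "spath adj xs \<longleftrightarrow> xs \<noteq> [] \<and> distinct xs \<and> (\<forall>i. Suc i < length xs \<longrightarrow> adj (xs ! i) (xs ! Suc i))"

definition orb_adj :: "('v::finite \<Rightarrow> 'v \<Rightarrow> bool) \<Rightarrow> 'v \<Rightarrow> 'v \<Rightarrow> bool" where
  "orb_adj adj n n' \<longleftrightarrow> n \<in> nodes adj \<and> n' \<in> nodes adj \<and> n \<noteq> n' \<and>
     (\<exists>xs. spath adj xs \<and> hd xs = n \<and> last xs = n' \<and>
        (\<forall>v\<in>set (butlast (tl xs)). valency adj v = 2))"

definition orb_edges :: "('v::finite \<Rightarrow> 'v \<Rightarrow> bool) \<Rightarrow> 'v set set" where
  "orb_edges adj = {{n, n'} | n n'. orb_adj adj n n'}"

definition orb_valency :: "('v::finite \<Rightarrow> 'v \<Rightarrow> bool) \<Rightarrow> 'v \<Rightarrow> nat" where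
  "orb_valency adj n = card {n'. orb_adj adj n n'}"

definition Ppart :: "('v::finite \<Rightarrow> 'v \<Rightarrow> bool) \<Rightarrow> ('v \<Rightarrow> int) \<Rightarrow> ('v \<Rightarrow> rat) \<Rightarrow> (('v \<Rightarrow> rat) \<Rightarrow> int) \<Rightarrow> ('v \<Rightarrow> rat) \<Rightarrow> int" where
  "Ppart adj e lam R x =
     (\<Sum>ed\<in>orb_edges adj. Pedge adj e lam R ed x)
     - (\<Sum>n\<in>nodes adj. (int (orb_valency adj n) - 1) * Pn adj e lam R n x)"

definition orb_gt :: "('v::finite \<Rightarrow> 'v \<Rightarrow> bool) \<Rightarrow> 'v \<Rightarrow> 'v \<Rightarrow> 'v \<Rightarrow> bool" where
  "orb_gt adj n0 n n' \<longleftrightarrow> orb_adj adj n n' \<and>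
     (\<exists>ys. spath (orb_adj adj) ys \<and> length ys \<ge> 2 \<and> hd ys = n \<and> last ys = n0 \<and> ys ! 1 = n')"

definition mult_s :: "('v::finite \<Rightarrow> 'v \<Rightarrow> bool) \<Rightarrow> 'v \<Rightarrow> ('v \<Rightarrow> rat) \<Rightarrow> int" where
  "mult_s adj n0 \<beta> = (if \<beta> n0 \<ge> 0 then 1 else 0)
     + int (card {(n, n'). orb_gt adj n0 n n' \<and> \<beta> n \<ge> 0 \<and> \<beta> n' < 0})"

end

theory Submission
  imports Defs "HOL-Analysis.Cartesian_Space"
begin

text \<open>For a negative definite tree all entries of every E*_v are positive, so each a_n has
  positive coordinates and A has a unique leading monomial. Comparing leading t_n-terms then shows
  that the quotients P^n and P^{n,n'} are simply the parts of P^+ consisting of the monomials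
  whose t_n- (resp. t_n- or t_{n'}-) exponent is nonnegative. Hence the coefficient of t^\<beta> in
  P_h is p_\<beta> times an integer depending only on the signs of the \<beta>_n. Rooting the orbifold tree
  at n_0 and matching every other node c with the edge to its orbifold parent, this integer
  becomes the number of edges c > parent(c) with \<beta>_c \<ge> 0 > \<beta>_{parent(c)}, plus 1 if
  \<beta>_{n_0} \<ge> 0, which is s(\<beta>).\<close>

lemma in_set_butlast_tl_nth:
  assumes "v \<in> set (butlast (tl xs))"
  obtains i where "0 < i" "Suc i < length xs" "v = xs ! i"
proof -
  obtain j where j: "j < length (butlast (tl xs))" "v = butlast (tl xs) ! j"
    using assms by (auto simp: in_set_conv_nth)
  then have "v = xs ! Suc j" "Suc (Suc j) < length xs"
    by (simp_all add: nth_butlast nth_tl)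
  then show thesis by (intro that[of "Suc j"]) auto
qed

lemma nth_in_set_butlast_tl:
  assumes "0 < i" "Suc i < length xs"
  shows "xs ! i \<in> set (butlast (tl xs))"
  using assms by (auto simp: in_set_conv_nth nth_butlast nth_tl intro!: exI[of _ "i - 1"])

lemma spath_rev:
  assumes "spath R xs" and sym: "\<And>u w. R u w \<Longrightarrow> R w u"
  shows "spath R (rev xs)"
  unfolding spath_def
proof (intro conjI allI impI)
  show "rev xs \<noteq> []" "distinct (rev xs)" using assms unfolding spath_def by auto
  fix i assume i: "Suc i < length (rev xs)"
  define j where "j = length xs - Suc (Suc i)"
  have "R (xs ! j) (xs ! Suc j)" using assms(1) i unfolding spath_def j_def by auto
  moreover have "rev xs ! i = xs ! Suc j" "rev xs ! Suc i = xs ! j"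
    using i unfolding j_def by (simp_all add: rev_nth Suc_diff_Suc)
  ultimately show "R (rev xs ! i) (rev xs ! Suc i)" using sym by simp
qed

lemma spath_Cons:
  assumes "spath R ys" "x \<notin> set ys" "R x (hd ys)"
  shows "spath R (x # ys)"
  unfolding spath_def
proof (intro conjI allI impI)
  show "x # ys \<noteq> []" "distinct (x # ys)" using assms unfolding spath_def by simp_all
  fix i assume i: "Suc i < length (x # ys)"
  show "R ((x # ys) ! i) ((x # ys) ! Suc i)"
    using assms(1,3) i unfolding spath_def by (cases i; cases ys) auto
qed

lemma set_butlast_tl_rev: "set (butlast (tl (rev xs))) = set (butlast (tl xs))"
  by (metis butlast_rev set_rev butlast_tl rev_swap)

text \<open>An upward step right after a downward one would revisit the previous vertex.\<close>
lemma distinct_path_stays_downward: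
  assumes "distinct ys"
    and step: "\<And>i. Suc i < length ys \<Longrightarrow>
      (ys!i \<noteq> r \<and> ys!Suc i = p (ys!i)) \<or> (ys!Suc i \<noteq> r \<and> ys!i = p (ys!Suc i))"
    and first_down: "ys!Suc 0 \<noteq> r \<and> ys!0 = p (ys!Suc 0)"
    and "Suc i < length ys"
  shows "ys!Suc i \<noteq> r \<and> ys!i = p (ys!Suc i)"
  using \<open>Suc i < length ys\<close>
proof (induction i)
  case 0 then show ?case using first_down by simp
next
  case (Suc i)
  have "ys ! i \<noteq> ys ! Suc (Suc i)" using \<open>distinct ys\<close> Suc.prems
    by (simp add: distinct_conv_nth)
  then show ?case using step[of "Suc i"] Suc by auto
qed

lemma distinct_path_last_downward:
  assumes "distinct ys" "Suc 0 < length ys"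
    and "\<And>i. Suc i < length ys \<Longrightarrow>
      (ys!i \<noteq> r \<and> ys!Suc i = p (ys!i)) \<or> (ys!Suc i \<noteq> r \<and> ys!i = p (ys!Suc i))"
    and "\<not> (ys!0 \<noteq> r \<and> ys!Suc 0 = p (ys!0))"
  shows "last ys \<noteq> r \<and> rev ys ! 1 = p (last ys)"
proof -
  have "ys!Suc 0 \<noteq> r \<and> ys!0 = p (ys!Suc 0)" using assms(2-4) by blast
  from distinct_path_stays_downward[OF assms(1,3) this, of "length ys - 2"]
  have "ys!(length ys - 1) \<noteq> r \<and> ys!(length ys - 2) = p (ys!(length ys - 1))"
    using assms(2) by (simp add: Suc_diff_Suc numeral_2_eq_2)
  moreover have "last ys = ys ! (length ys - 1)" using assms(2) by (intro last_conv_nth) auto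
  moreover have "rev ys ! 1 = ys ! (length ys - 2)" using assms(2) by (simp add: rev_nth numeral_2_eq_2)
  ultimately show ?thesis by simp
qed

locale rooted_tree =
  fixes adj :: "'v::finite \<Rightarrow> 'v \<Rightarrow> bool" and r :: 'v
  assumes tree: "is_tree adj"
begin

lemma adj_sym: "adj u w \<Longrightarrow> adj w u"
  and adj_irrefl: "\<not> adj u u"
  and adj_connected: "adj\<^sup>*\<^sup>* u w"
  and card_graph_edges: "card (graph_edges adj) + 1 = card (UNIV :: 'v set)"
  using tree by (auto simp: is_tree_def)

definition depth :: "'v \<Rightarrow> nat" where
  "depth v = (LEAST k. (adj ^^ k) v r)"

lemma relpowp_depth: "(adj ^^ depth v) v r"
proof -
  obtain k where "(adj ^^ k) v r" using adj_connected[of v r] by (auto simp: rtranclp_power)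
  then show ?thesis unfolding depth_def by (rule LeastI)
qed

lemma depth_le: "(adj ^^ k) v r \<Longrightarrow> depth v \<le> k"
  unfolding depth_def by (rule Least_le)

lemma depth_eq_0_iff: "depth v = 0 \<longleftrightarrow> v = r"
  using relpowp_depth[of v] depth_le[of 0 v] by auto

lemma depth_adj_le: "adj v w \<Longrightarrow> depth v \<le> depth w + 1"
  using depth_le relpowp_Suc_I2[OF _ relpowp_depth[of w]] by fastforce

definition parent :: "'v \<Rightarrow> 'v" where
  "parent v = (SOME w. adj v w \<and> depth w + 1 = depth v)"

lemma adj_parent_depth:
  assumes "v \<noteq> r"
  shows "adj v (parent v) \<and> depth (parent v) + 1 = depth v"
proof -
  obtain j where j: "depth v = Suc j" using assms depth_eq_0_iff by (cases "depth v") auto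
  obtain w where w: "adj v w" "(adj ^^ j) w r"
    using relpowp_depth[of v] j relpowp_Suc_D2 by fastforce
  have "adj v w \<and> depth w + 1 = depth v"
    using depth_le[OF w(2)] depth_adj_le[OF w(1)] w(1) j by auto
  then show ?thesis unfolding parent_def by (rule someI)
qed

lemma depth_parent_less: "v \<noteq> r \<Longrightarrow> depth (parent v) < depth v"
  using adj_parent_depth by fastforce

text \<open>The edges {c, parent c} for c \<noteq> r are pairwise distinct, and a tree has exactly
  as many edges as non-root vertices, so every edge is of this form.\<close>
lemma adj_parent_cases:
  assumes "adj u w"
  shows "(u \<noteq> r \<and> w = parent u) \<or> (w \<noteq> r \<and> u = parent w)"
proof -
  let ?edge = "\<lambda>c. {c, parent c}"
  have inj: "inj_on ?edge (UNIV - {r})"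
  proof (rule inj_onI)
    fix c c' assume "c \<in> UNIV - {r}" "c' \<in> UNIV - {r}" "?edge c = ?edge c'"
    then show "c = c'"
      using depth_parent_less[of c] depth_parent_less[of c'] by (auto simp: doubleton_eq_iff)
  qed
  have sub: "?edge ` (UNIV - {r}) \<subseteq> graph_edges adj"
    unfolding graph_edges_def using adj_parent_depth by blast
  have "card (?edge ` (UNIV - {r})) = card (graph_edges adj)"
    using card_image[OF inj] card_graph_edges by (simp add: card_Diff_singleton)
  then have all: "?edge ` (UNIV - {r}) = graph_edges adj"
    using card_subset_eq[OF _ sub] by simp
  have "{u, w} \<in> graph_edges adj" using assms unfolding graph_edges_def by blast
  then obtain c where "c \<noteq> r" "{u, w} = {c, parent c}" using all by blast
  then show ?thesis by (auto simp: doubleton_eq_iff)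
qed

lemma depth_parent_iter: "k \<le> depth v \<Longrightarrow> depth ((parent ^^ k) v) = depth v - k"
proof (induction k)
  case (Suc k)
  then have "(parent ^^ k) v \<noteq> r" using depth_eq_0_iff by fastforce
  then have "Suc (depth (parent ((parent ^^ k) v))) = depth v - k"
    using adj_parent_depth[of "(parent ^^ k) v"] Suc by simp
  then show ?case by simp
qed simp

lemma parent_iter_depth: "(parent ^^ depth v) v = r"
  using depth_parent_iter[of "depth v" v] depth_eq_0_iff by simp

lemma valency_ge_2_if_child:
  assumes "x \<noteq> r" "c \<noteq> r" "parent c = x"
  shows "valency adj x \<ge> 2"
proof -
  have "parent x \<noteq> c" using depth_parent_less assms by (metis less_asym)
  moreover have "{parent x, c} \<subseteq> {w. adj x w}" using adj_parent_depth assms adj_sym by auto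
  ultimately show ?thesis unfolding valency_def by (metis card_2_iff card_mono finite)
qed

lemma valency_ge_3_if_two_children:
  assumes "x \<noteq> r" "c \<noteq> r" "parent c = x" "c' \<noteq> r" "parent c' = x" "c \<noteq> c'"
  shows "valency adj x \<ge> 3"
proof -
  have "parent x \<noteq> c" "parent x \<noteq> c'" using depth_parent_less assms by (metis less_asym)+
  moreover have "{parent x, c, c'} \<subseteq> {w. adj x w}"
    using adj_parent_depth[of x] adj_parent_depth[of c] adj_parent_depth[of c'] assms adj_sym
    by auto
  ultimately show ?thesis using assms(6) unfolding valency_def
    by (metis card_mono finite card_3_iff)
qed

lemma spath_parent_iter:
  assumes "k \<le> depth n"
  shows "spath adj (map (\<lambda>i. (parent ^^ i) n) [0..<Suc k])" (is "spath adj ?xs")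
  unfolding spath_def
proof (intro conjI allI impI)
  have depth_nth: "depth ((parent ^^ i) n) = depth n - i" if "i \<le> k" for i
    using depth_parent_iter that assms by simp
  show "distinct ?xs" unfolding distinct_conv_nth
  proof (intro allI impI)
    fix i j assume "i < length ?xs" "j < length ?xs" "i \<noteq> j"
    then show "?xs ! i \<noteq> ?xs ! j"
      using depth_nth[of i] depth_nth[of j] assms by (auto simp del: upt_Suc)
  qed
  fix i assume i: "Suc i < length ?xs"
  then have "(parent ^^ i) n \<noteq> r" using depth_nth[of i] depth_eq_0_iff[of r] assms by auto
  then show "adj (?xs ! i) (?xs ! Suc i)"
    using adj_parent_depth i by (simp del: upt_Suc)
qed simp

end

locale node_rooted_tree = rooted_tree adj r for adj :: "'v::finite \<Rightarrow> 'v \<Rightarrow> bool" and r +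
  assumes root_node: "r \<in> nodes adj"
begin

lemma interior_not_node:
  assumes "\<forall>v\<in>set (butlast (tl xs)). valency adj v = 2" "0 < i" "Suc i < length xs"
  shows "xs ! i \<notin> nodes adj" "xs ! i \<noteq> r"
  using assms nth_in_set_butlast_tl[of i xs] root_node by (auto simp: nodes_def)

definition orb_parent_dist :: "'v \<Rightarrow> nat" where
  "orb_parent_dist n = (LEAST k. 0 < k \<and> (parent ^^ k) n \<in> nodes adj)"

definition orb_parent :: "'v \<Rightarrow> 'v" where
  "orb_parent n = (parent ^^ orb_parent_dist n) n"

lemma orb_parent_dist_spec:
  assumes "n \<noteq> r"
  shows "0 < orb_parent_dist n" "orb_parent_dist n \<le> depth n" "orb_parent n \<in> nodes adj"
    "\<And>i. 0 < i \<Longrightarrow> i < orb_parent_dist n \<Longrightarrow> (parent ^^ i) n \<notin> nodes adj"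
proof -
  have ex: "0 < depth n \<and> (parent ^^ depth n) n \<in> nodes adj"
    using assms depth_eq_0_iff parent_iter_depth root_node by auto
  show "0 < orb_parent_dist n" "orb_parent n \<in> nodes adj"
    unfolding orb_parent_dist_def orb_parent_def
    using LeastI[of "\<lambda>k. 0 < k \<and> (parent ^^ k) n \<in> nodes adj", OF ex] by auto
  show "orb_parent_dist n \<le> depth n"
    unfolding orb_parent_dist_def
    using Least_le[of "\<lambda>k. 0 < k \<and> (parent ^^ k) n \<in> nodes adj", OF ex] .
  show "\<And>i. 0 < i \<Longrightarrow> i < orb_parent_dist n \<Longrightarrow> (parent ^^ i) n \<notin> nodes adj"
    unfolding orb_parent_dist_def using not_less_Least by blast
qed

lemma orb_parent_node: "n \<noteq> r \<Longrightarrow> orb_parent n \<in> nodes adj"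
  using orb_parent_dist_spec by blast

lemma depth_orb_parent_less: "n \<noteq> r \<Longrightarrow> depth (orb_parent n) < depth n"
  using orb_parent_dist_spec[of n] depth_parent_iter[of "orb_parent_dist n" n]
  unfolding orb_parent_def by simp

text \<open>Turning downwards at a vertex would give it two children besides its parent.\<close>
lemma spath_stays_upward:
  assumes "spath adj xs" and interior: "\<forall>v\<in>set (butlast (tl xs)). valency adj v = 2"
    and first_up: "xs ! 0 \<noteq> r" "xs ! 1 = parent (xs ! 0)"
    and "Suc i < length xs"
  shows "xs ! i \<noteq> r \<and> xs ! Suc i = parent (xs ! i)"
  using \<open>Suc i < length xs\<close>
proof (induction i)
  case 0 then show ?case using first_up by simp
next
  case (Suc i)
  then have IH: "xs ! i \<noteq> r \<and> xs ! Suc i = parent (xs ! i)" by simp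
  have mid: "xs ! Suc i \<noteq> r" "valency adj (xs ! Suc i) = 2"
    using interior_not_node[OF interior, of "Suc i"] interior nth_in_set_butlast_tl[of "Suc i" xs]
      Suc.prems by auto
  show ?case
  proof (rule ccontr)
    assume not_up: "\<not> ?case"
    have "adj (xs ! Suc i) (xs ! Suc (Suc i))"
      using \<open>spath adj xs\<close> Suc.prems unfolding spath_def by blast
    then have down: "xs ! Suc (Suc i) \<noteq> r" "xs ! Suc i = parent (xs ! Suc (Suc i))"
      using adj_parent_cases not_up mid(1) by blast+
    have "xs ! i \<noteq> xs ! Suc (Suc i)"
      using \<open>spath adj xs\<close> Suc.prems by (simp add: spath_def distinct_conv_nth)
    then have "valency adj (xs ! Suc i) \<ge> 3"
      using valency_ge_3_if_two_children[OF mid(1) _ _ down(1) down(2)[symmetric]] IH by auto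
    then show False using mid(2) by simp
  qed
qed

lemma spath_upward_reaches_orb_parent:
  assumes "spath adj xs" "Suc 0 < length xs"
    and interior: "\<forall>v\<in>set (butlast (tl xs)). valency adj v = 2"
    and "last xs \<in> nodes adj" and first_up: "hd xs \<noteq> r" "xs ! 1 = parent (hd xs)"
  shows "last xs = orb_parent (hd xs)"
proof -
  have hd: "hd xs = xs ! 0" using assms(2) by (cases xs) auto
  have nth: "xs ! i = (parent ^^ i) (hd xs)" if "i < length xs" for i
    using that
  proof (induction i)
    case (Suc i)
    then show ?case using spath_stays_upward[OF assms(1) interior, of i] first_up hd by simp
  qed (simp add: hd)
  define m where "m = length xs - 1"
  have "last xs = xs ! m" unfolding m_def using assms(2) by (intro last_conv_nth) auto
  then have last: "last xs = (parent ^^ m) (hd xs)" using nth[of m] assms(2) m_def by simp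
  have "orb_parent_dist (hd xs) = m" unfolding orb_parent_dist_def
  proof (rule Least_equality)
    show "0 < m \<and> (parent ^^ m) (hd xs) \<in> nodes adj" using assms(2,4) last m_def by simp
    fix k assume "0 < k \<and> (parent ^^ k) (hd xs) \<in> nodes adj"
    then show "m \<le> k"
      using interior_not_node(1)[OF interior, of k] nth[of k] unfolding m_def by fastforce
  qed
  then show ?thesis using last unfolding orb_parent_def by simp
qed

lemma orb_adj_sym:
  assumes "orb_adj adj n n'"
  shows "orb_adj adj n' n"
proof -
  obtain xs where xs: "n \<in> nodes adj" "n' \<in> nodes adj" "n \<noteq> n'" "spath adj xs"
    "hd xs = n" "last xs = n'" "\<forall>v\<in>set (butlast (tl xs)). valency adj v = 2"
    using assms unfolding orb_adj_def by blast
  have "xs \<noteq> []" using xs(4) unfolding spath_def by simp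
  then show ?thesis unfolding orb_adj_def using xs spath_rev[OF xs(4) adj_sym]
    by (intro conjI exI[of _ "rev xs"]) (auto simp: hd_rev last_rev set_butlast_tl_rev)
qed

lemma orb_adj_orb_parent:
  assumes "n \<in> nodes adj" "n \<noteq> r"
  shows "orb_adj adj n (orb_parent n)"
proof -
  define k where "k = orb_parent_dist n"
  define xs where "xs = map (\<lambda>i. (parent ^^ i) n) [0..<Suc k]"
  note k = orb_parent_dist_spec[OF assms(2), folded k_def]
  have nth: "i < Suc k \<Longrightarrow> xs ! i = (parent ^^ i) n" for i
    unfolding xs_def by (simp del: upt_Suc)
  have "spath adj xs" unfolding xs_def using spath_parent_iter k(2) .
  moreover have "hd xs = n" "last xs = orb_parent n"
    unfolding xs_def orb_parent_def k_def by (simp_all del: upt_Suc add: hd_map last_map)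
  moreover have "valency adj v = 2" if v: "v \<in> set (butlast (tl xs))" for v
  proof -
    obtain i where i: "0 < i" "Suc i < length xs" "v = xs ! i"
      by (rule in_set_butlast_tl_nth[OF v])
    then obtain j where j: "i = Suc j" by (cases i) auto
    have "v \<notin> nodes adj" "i < k" using k(4)[OF i(1)] nth[of i] i unfolding xs_def by auto
    moreover have "depth ((parent ^^ j) n) = depth n - j"
      using depth_parent_iter k(2) j \<open>i < k\<close> by simp
    then have "(parent ^^ j) n \<noteq> r"
      using depth_eq_0_iff[of r] k(2) j \<open>i < k\<close> by auto
    moreover have "parent ((parent ^^ j) n) = v" using nth[of i] i(3) j \<open>i < k\<close> by simp
    moreover have "v \<noteq> r" using \<open>v \<notin> nodes adj\<close> root_node by blast
    ultimately have "valency adj v \<ge> 2" using valency_ge_2_if_child by blast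
    then show ?thesis using \<open>v \<notin> nodes adj\<close> unfolding nodes_def by simp
  qed
  moreover have "n \<noteq> orb_parent n" using depth_orb_parent_less[OF assms(2)] by auto
  ultimately show ?thesis
    unfolding orb_adj_def using assms(1) orb_parent_node[OF assms(2)] by blast
qed

lemma orb_adj_iff:
  "orb_adj adj n n' \<longleftrightarrow> n \<in> nodes adj \<and> n' \<in> nodes adj \<and>
     ((n \<noteq> r \<and> n' = orb_parent n) \<or> (n' \<noteq> r \<and> n = orb_parent n'))"
proof
  assume "orb_adj adj n n'"
  then obtain xs where xs: "n \<in> nodes adj" "n' \<in> nodes adj" "n \<noteq> n'" "spath adj xs"
    "hd xs = n" "last xs = n'" and interior: "\<forall>v\<in>set (butlast (tl xs)). valency adj v = 2"
    unfolding orb_adj_def by blast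
  have len: "Suc 0 < length xs"
    using xs(3-6) unfolding spath_def by (cases xs) auto
  have hd: "hd xs = xs ! 0" using len by (cases xs) auto
  show "n \<in> nodes adj \<and> n' \<in> nodes adj \<and>
     ((n \<noteq> r \<and> n' = orb_parent n) \<or> (n' \<noteq> r \<and> n = orb_parent n'))"
  proof (cases "xs ! 0 \<noteq> r \<and> xs ! Suc 0 = parent (xs ! 0)")
    case True
    then show ?thesis using spath_upward_reaches_orb_parent[OF xs(4) len interior] xs hd by simp
  next
    case False
    \<comment> \<open>then the path arrives at n' from below, so its reversal leaves n' upwards\<close>
    have "\<And>i. Suc i < length xs \<Longrightarrow> adj (xs ! i) (xs ! Suc i)" using xs(4) unfolding spath_def by blast
    then have "last xs \<noteq> r \<and> rev xs ! 1 = parent (last xs)"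
      using distinct_path_last_downward[of xs r parent] xs(4) len False adj_parent_cases
      unfolding spath_def by blast
    moreover have "last (rev xs) = orb_parent (hd (rev xs))"
      using spath_upward_reaches_orb_parent[OF spath_rev[OF xs(4) adj_sym]] len xs calculation
      by (simp add: hd_rev last_rev set_butlast_tl_rev interior)
    ultimately show ?thesis using xs by (simp add: hd_rev last_rev)
  qed
next
  assume "n \<in> nodes adj \<and> n' \<in> nodes adj \<and>
     ((n \<noteq> r \<and> n' = orb_parent n) \<or> (n' \<noteq> r \<and> n = orb_parent n'))"
  then show "orb_adj adj n n'" using orb_adj_orb_parent orb_adj_sym by blast
qed

lemma spath_orb_parent_Cons:
  assumes "n \<in> nodes adj" "n \<noteq> r" and ys: "spath (orb_adj adj) ys" "hd ys = orb_parent n"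
    and below: "\<forall>y\<in>set ys. depth y \<le> depth (orb_parent n)"
  shows "spath (orb_adj adj) (n # ys)"
proof (rule spath_Cons[OF ys(1)])
  show "n \<notin> set ys" using below depth_orb_parent_less[OF assms(2)] by fastforce
  show "orb_adj adj n (hd ys)" using orb_adj_orb_parent[OF assms(1,2)] ys(2) by simp
qed

lemma orb_path_to_root:
  "n \<in> nodes adj \<Longrightarrow> \<exists>ys. spath (orb_adj adj) ys \<and> hd ys = n \<and> last ys = r \<and>
     (\<forall>y\<in>set ys. depth y \<le> depth n)"
proof (induction "depth n" arbitrary: n rule: less_induct)
  case less
  show ?case
  proof (cases "n = r")
    case True
    then show ?thesis by (intro exI[of _ "[r]"]) (auto simp: spath_def)
  next
    case False
    obtain ys where ys: "spath (orb_adj adj) ys" "hd ys = orb_parent n" "last ys = r"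
      "\<forall>y\<in>set ys. depth y \<le> depth (orb_parent n)"
      using less(1)[OF depth_orb_parent_less[OF False] orb_parent_node[OF False]] by blast
    have "ys \<noteq> []" using ys(1) unfolding spath_def by simp
    then show ?thesis
      using spath_orb_parent_Cons[OF less(2) False ys(1,2,4)] ys(3,4)
        depth_orb_parent_less[OF False]
      by (intro exI[of _ "n # ys"]) fastforce
  qed
qed

lemma orb_gt_iff: "orb_gt adj r n n' \<longleftrightarrow> n \<in> nodes adj \<and> n \<noteq> r \<and> n' = orb_parent n"
proof
  assume "n \<in> nodes adj \<and> n \<noteq> r \<and> n' = orb_parent n"
  then have n: "n \<in> nodes adj" "n \<noteq> r" "n' = orb_parent n" by auto
  obtain ys where ys: "spath (orb_adj adj) ys" "hd ys = orb_parent n" "last ys = r"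
    "\<forall>y\<in>set ys. depth y \<le> depth (orb_parent n)"
    using orb_path_to_root[OF orb_parent_node[OF n(2)]] by blast
  have "ys \<noteq> []" using ys(1) unfolding spath_def by simp
  then show "orb_gt adj r n n'"
    unfolding orb_gt_def using orb_adj_orb_parent[OF n(1,2)] n(3)
      spath_orb_parent_Cons[OF n(1,2) ys(1,2,4)] ys(2,3)
    by (intro conjI exI[of _ "n # ys"]) (auto simp: Suc_le_eq hd_conv_nth)
next
  assume "orb_gt adj r n n'"
  then obtain ys where "orb_adj adj n n'" and ys: "spath (orb_adj adj) ys" "2 \<le> length ys"
    "hd ys = n" "last ys = r" "ys ! 1 = n'" unfolding orb_gt_def by blast
  then have "n \<in> nodes adj" using orb_adj_iff by blast
  have "\<And>i. Suc i < length ys \<Longrightarrow> orb_adj adj (ys ! i) (ys ! Suc i)"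
    using ys(1) unfolding spath_def by blast
  then have step: "\<And>i. Suc i < length ys \<Longrightarrow> (ys!i \<noteq> r \<and> ys!Suc i = orb_parent (ys!i))
      \<or> (ys!Suc i \<noteq> r \<and> ys!i = orb_parent (ys!Suc i))"
    using orb_adj_iff by blast
  have hd: "hd ys = ys ! 0" using ys(2) by (cases ys) auto
  show "n \<in> nodes adj \<and> n \<noteq> r \<and> n' = orb_parent n"
  proof (rule ccontr)
    assume "\<not> ?thesis"
    then have "\<not> (ys!0 \<noteq> r \<and> ys!Suc 0 = orb_parent (ys!0))"
      using \<open>n \<in> nodes adj\<close> ys(3,5) hd by auto
    then have "last ys \<noteq> r"
      using distinct_path_last_downward[of ys r orb_parent] ys(1,2) step
      unfolding spath_def by auto
    then show False using ys(4) by simp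
  qed
qed

lemma orb_valency_eq:
  assumes "n \<in> nodes adj"
  shows "int (orb_valency adj n) =
    (if n \<noteq> r then 1 else 0) + int (card {c \<in> nodes adj - {r}. orb_parent c = n})"
proof -
  have "{n'. orb_adj adj n n'} =
      (if n \<noteq> r then {orb_parent n} else {}) \<union> {c \<in> nodes adj - {r}. orb_parent c = n}"
    using assms orb_parent_node by (auto simp: orb_adj_iff)
  moreover have "(if n \<noteq> r then {orb_parent n} else {}) \<inter> {c \<in> nodes adj - {r}. orb_parent c = n} = {}"
    using depth_orb_parent_less[of n] depth_orb_parent_less[of "orb_parent n"] by auto
  ultimately show ?thesis
    unfolding orb_valency_def by (simp add: card_Un_disjoint)
qed

lemma orb_edges_eq: "orb_edges adj = (\<lambda>c. {c, orb_parent c}) ` (nodes adj - {r})"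
  unfolding orb_edges_def orb_adj_iff using orb_parent_node by (auto simp: insert_commute)

lemma inj_on_orb_edge: "inj_on (\<lambda>c. {c, orb_parent c}) (nodes adj - {r})"
proof (rule inj_onI)
  fix c c' assume "c \<in> nodes adj - {r}" "c' \<in> nodes adj - {r}" "{c, orb_parent c} = {c', orb_parent c'}"
  then show "c = c'"
    using depth_orb_parent_less[of c] depth_orb_parent_less[of c'] by (auto simp: doubleton_eq_iff)
qed

text \<open>Indexing edges by their lower endpoint c, the valency term subtracts the indicator of
  \<beta> (orb_parent c) \<ge> 0 from that of the edge, leaving the indicator of an edge counted by s.\<close>
lemma mult_s_eq_edge_count:
  fixes \<beta> :: "'v \<Rightarrow> rat"
  defines "ind \<equiv> \<lambda>x. if 0 \<le> \<beta> x then 1 else 0 :: int"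
  shows "(\<Sum>ed\<in>orb_edges adj. if \<exists>n\<in>ed. 0 \<le> \<beta> n then 1 else 0)
       - (\<Sum>n\<in>nodes adj. (int (orb_valency adj n) - 1) * ind n) = mult_s adj r \<beta>"
proof -
  let ?C = "nodes adj - {r}"
  have edges: "(\<Sum>ed\<in>orb_edges adj. if \<exists>n\<in>ed. 0 \<le> \<beta> n then 1 else 0 :: int)
      = (\<Sum>c\<in>?C. if 0 \<le> \<beta> c \<or> 0 \<le> \<beta> (orb_parent c) then 1 else 0)"
    unfolding orb_edges_eq by (simp add: sum.reindex[OF inj_on_orb_edge])
  have "(\<Sum>c\<in>?C. ind (orb_parent c))
      = (\<Sum>n\<in>nodes adj. \<Sum>c\<in>{c \<in> ?C. orb_parent c = n}. ind (orb_parent c))"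
    by (rule sum.group[symmetric]) (use orb_parent_node in auto)
  also have "\<dots> = (\<Sum>n\<in>nodes adj. int (card {c \<in> ?C. orb_parent c = n}) * ind n)"
    by (rule sum.cong) auto
  also have "\<dots> = (\<Sum>n\<in>nodes adj. (int (orb_valency adj n) - 1) * ind n + (if n = r then ind n else 0))"
    by (rule sum.cong) (auto simp: orb_valency_eq algebra_simps)
  finally have valencies: "(\<Sum>n\<in>nodes adj. (int (orb_valency adj n) - 1) * ind n)
      = (\<Sum>c\<in>?C. ind (orb_parent c)) - ind r"
    using root_node by (simp add: sum.distrib)
  have "{(n, n'). orb_gt adj r n n' \<and> \<beta> n \<ge> 0 \<and> \<beta> n' < 0}
      = (\<lambda>c. (c, orb_parent c)) ` {c \<in> ?C. 0 \<le> \<beta> c \<and> \<beta> (orb_parent c) < 0}"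
    by (auto simp: orb_gt_iff)
  then have "int (card {(n, n'). orb_gt adj r n n' \<and> \<beta> n \<ge> 0 \<and> \<beta> n' < 0})
      = (\<Sum>c\<in>?C. if 0 \<le> \<beta> c \<and> \<beta> (orb_parent c) < 0 then 1 else 0)"
    by (simp add: card_image inj_on_def sum.If_cases Int_def conj_commute)
  then have mult: "mult_s adj r \<beta> = ind r + (\<Sum>c\<in>?C. if 0 \<le> \<beta> c \<and> \<beta> (orb_parent c) < 0 then 1 else 0)"
    unfolding mult_s_def ind_def by simp
  have "(\<Sum>c\<in>?C. if 0 \<le> \<beta> c \<or> 0 \<le> \<beta> (orb_parent c) then 1 else 0 :: int) - (\<Sum>c\<in>?C. ind (orb_parent c))
      = (\<Sum>c\<in>?C. if 0 \<le> \<beta> c \<and> \<beta> (orb_parent c) < 0 then 1 else 0)"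
    unfolding sum_subtractf[symmetric] by (rule sum.cong) (auto simp: ind_def)
  then show ?thesis using edges valencies mult by simp
qed

end

lemma quadratic_form_eq_sum_form_E:
  "(\<Sum>v\<in>UNIV. \<Sum>w\<in>UNIV. z v * of_int (I v w) * z w) = (\<Sum>w\<in>UNIV. z w * form_E I z w)"
  unfolding form_E_def by (subst sum.swap) (simp add: sum_distrib_left mult_ac)

lemma neg_definite_rat:
  fixes I :: "'v::finite \<Rightarrow> 'v \<Rightarrow> int" and z :: "'v \<Rightarrow> rat"
  assumes "neg_definite I" "\<exists>v. z v \<noteq> 0"
  shows "(\<Sum>v\<in>UNIV. \<Sum>w\<in>UNIV. z v * of_int (I v w) * z w) < 0"
proof -
  have "(\<Sum>v\<in>UNIV. \<Sum>w\<in>UNIV. of_rat (z v) * of_int (I v w) * of_rat (z w)) < (0::real)"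
    using assms unfolding neg_definite_def by simp
  moreover have "(\<Sum>v\<in>UNIV. \<Sum>w\<in>UNIV. of_rat (z v) * of_int (I v w) * of_rat (z w))
     = (of_rat (\<Sum>v\<in>UNIV. \<Sum>w\<in>UNIV. z v * of_int (I v w) * z w) :: real)"
    by (simp only: of_rat_sum of_rat_mult of_rat_of_int_eq)
  ultimately show ?thesis by (simp add: of_rat_less_0_iff)
qed

lemma form_E_inj:
  fixes I :: "'v::finite \<Rightarrow> 'v \<Rightarrow> int"
  assumes "neg_definite I" and eq: "\<And>w. form_E I x w = form_E I y w"
  shows "x = y"
proof (rule ccontr)
  assume "x \<noteq> y"
  define z where "z = (\<lambda>v. x v - y v)"
  have "\<exists>v. z v \<noteq> 0" using \<open>x \<noteq> y\<close> unfolding z_def by (auto simp: fun_eq_iff)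
  moreover have "form_E I z w = 0" for w
    using eq[of w] unfolding z_def form_E_def by (simp add: left_diff_distrib sum_subtractf)
  ultimately show False
    using neg_definite_rat[OF assms(1), of z] by (simp add: quadratic_form_eq_sum_form_E)
qed

lemma form_E_surj:
  fixes I :: "'v::finite \<Rightarrow> 'v \<Rightarrow> int"
  assumes "neg_definite I"
  shows "\<exists>x. \<forall>w. form_E I x w = b w"
proof -
  define M :: "rat^'v^'v" where "M = (\<chi> w u. of_int (I u w))"
  have M: "(M *v x) $ w = form_E I (\<lambda>u. x $ u) w" for x w
    unfolding M_def matrix_vector_mult_def form_E_def by (simp add: mult.commute)
  have "inj ((*v) M)"
  proof (rule injI)
    fix x y assume "M *v x = M *v y"
    then have "(\<lambda>u. x $ u) = (\<lambda>u. y $ u)"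
      using M by (intro form_E_inj[OF assms]) metis
    then show "x = y" by (simp add: vec_eq_iff fun_eq_iff)
  qed
  then have "surj ((*v) M)"
    by (rule vec.linear_inj_imp_surj[OF matrix_vector_mul_linear_gen])
  then obtain x where "M *v x = (\<chi> w. b w)" by (metis surjD)
  then have "form_E I (\<lambda>u. x $ u) w = b w" for w using M[of x w] by simp
  then show ?thesis by blast
qed

lemma form_E_Estar:
  fixes I :: "'v::finite \<Rightarrow> 'v \<Rightarrow> int"
  assumes "neg_definite I"
  shows "form_E I (Estar I v) w = (if v = w then -1 else 0)"
proof -
  obtain x where x: "\<forall>w. form_E I x w = (if v = w then -1 else 0)"
    using form_E_surj[OF assms, of "\<lambda>w. if v = w then -1 else 0"] by blast
  have "Estar I v = x" unfolding Estar_def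
    by (rule the_equality) (use x form_E_inj[OF assms] in auto)
  then show ?thesis using x by simp
qed

text \<open>Split E* = p - q into disjointly supported nonnegative parts. Pairing with q gives
  (Iq, q) = (Ip, q) + q_v \<ge> 0, because off-diagonal entries of I are nonnegative;
  definiteness then forces q = 0.\<close>
lemma Estar_nonneg:
  fixes I :: "'v::finite \<Rightarrow> 'v \<Rightarrow> int"
  assumes nd: "neg_definite I" and off_diag: "\<And>u w. u \<noteq> w \<Longrightarrow> I u w \<ge> 0"
  shows "Estar I v u \<ge> 0"
proof -
  define x where "x = Estar I v"
  define p where "p = (\<lambda>u. max (x u) 0)"
  define q where "q = (\<lambda>u. max (- x u) 0)"
  have x: "x u = p u - q u" for u unfolding p_def q_def by auto
  have pq: "p u * q u = 0" "p u \<ge> 0" "q u \<ge> 0" for u unfolding p_def q_def by (auto simp: max_def)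
  have "(\<Sum>w\<in>UNIV. q w * form_E I x w) = - q v"
    unfolding x_def form_E_Estar[OF nd] by (simp add: if_distrib cong: if_cong)
  moreover have "(\<Sum>w\<in>UNIV. q w * form_E I x w)
      = (\<Sum>w\<in>UNIV. \<Sum>u\<in>UNIV. q w * p u * of_int (I u w))
        - (\<Sum>w\<in>UNIV. \<Sum>u\<in>UNIV. q w * q u * of_int (I u w))"
    unfolding form_E_def x by (simp add: sum_distrib_left sum_subtractf[symmetric] algebra_simps)
  moreover have "(\<Sum>w\<in>UNIV. \<Sum>u\<in>UNIV. q w * p u * of_int (I u w)) \<ge> 0"
  proof (intro sum_nonneg)
    fix w u
    show "q w * p u * of_int (I u w) \<ge> 0"
      using pq[of w] pq[of u] off_diag[of u w] by (cases "u = w") (auto simp: mult.commute)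
  qed
  ultimately have "(\<Sum>u\<in>UNIV. \<Sum>w\<in>UNIV. q u * of_int (I u w) * q w) \<ge> 0"
    using pq(3)[of v] by (subst sum.swap) (simp add: mult_ac)
  then have "q u = 0" using neg_definite_rat[OF nd, of q] by force
  then show ?thesis unfolding q_def x_def by (simp add: max_def split: if_splits)
qed

text \<open>The zero set of E*_v is closed under adjacency (a zero entry of the nonnegative
  vector I E*_v at w forces the neighbours of w to vanish) and does not contain v;
  connectedness of the tree makes it empty.\<close>
lemma Estar_pos:
  fixes adj :: "'v::finite \<Rightarrow> 'v \<Rightarrow> bool"
  assumes tree: "is_tree adj" and nd: "neg_definite (inter_mat adj e)"
  shows "Estar (inter_mat adj e) v u > 0"
proof -
  interpret rooted_tree adj v using tree by unfold_locales
  let ?I = "inter_mat adj e"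
  define x where "x = Estar ?I v"
  have nonneg: "x a \<ge> 0" for a
    unfolding x_def by (rule Estar_nonneg[OF nd]) (simp add: inter_mat_def)
  have zero_spreads: "w \<noteq> v \<and> (\<forall>a. adj w a \<longrightarrow> x a = 0)" if "x w = 0" for w
  proof -
    let ?t = "\<lambda>a. if a = w then 0 else if adj a w then x a else 0"
    have fe: "form_E ?I x w = (\<Sum>a\<in>UNIV. ?t a)"
      unfolding form_E_def inter_mat_def using \<open>x w = 0\<close> by (intro sum.cong) auto
    have "form_E ?I x w \<ge> 0" unfolding fe by (rule sum_nonneg) (use nonneg in simp)
    then have "w \<noteq> v" using form_E_Estar[OF nd, of v v] unfolding x_def by auto
    then have "(\<Sum>a\<in>UNIV. ?t a) = 0"
      using form_E_Estar[OF nd, of v w] fe unfolding x_def by simp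
    then have "\<forall>a\<in>UNIV. ?t a = 0" using sum_nonneg_eq_0_iff[of UNIV ?t] nonneg by simp
    then show ?thesis using \<open>w \<noteq> v\<close> adj_sym adj_irrefl by (metis UNIV_I)
  qed
  show ?thesis
  proof (rule ccontr)
    assume "\<not> ?thesis"
    then have "x u = 0" using nonneg[of u] unfolding x_def by simp
    have "x b = 0" if "adj\<^sup>*\<^sup>* u b" for b
      using that by (induction rule: rtranclp_induct) (use \<open>x u = 0\<close> zero_spreads in blast)+
    then show False using adj_connected zero_spreads by blast
  qed
qed

lemma avec_pos:
  assumes "is_tree adj" "neg_definite (inter_mat adj e)" "\<forall>n\<in>nodes adj. lam n > 0"
    and "m \<in> nodes adj" "n \<in> nodes adj"
  shows "avec adj e lam m n > 0"
  using Estar_pos[OF assms(1,2)] assms(3-5) unfolding avec_def proj_N_def by simp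

lemma gmult_diff: "gmult P F x - gmult P G x = gmult P (\<lambda>z. F z - G z) x"
  unfolding gmult_def by (simp add: sum_subtractf[symmetric] right_diff_distrib)

lemma neg_deg_coeff_eq_0:
  "neg_deg adj e lam F n \<Longrightarrow> (\<Sum>m\<in>nodes adj. avec adj e lam m n) \<le> x n \<Longrightarrow> F x = 0"
  unfolding neg_deg_def gsupp_def by force

lemma Apoly_exponent:
  assumes "y \<in> gsupp (Apoly adj e lam)"
  obtains S where "S \<subseteq> nodes adj" "y = (\<lambda>u. \<Sum>m\<in>S. avec adj e lam m u)"
proof -
  have "{S. S \<subseteq> nodes adj \<and> (\<lambda>u. \<Sum>m\<in>S. avec adj e lam m u) = y} \<noteq> {}"
    using assms unfolding gsupp_def Apoly_def by (intro notI) simp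
  then show thesis using that by blast
qed

lemma finite_gsupp_Apoly: "finite (gsupp (Apoly adj e lam))"
proof (rule finite_subset)
  show "gsupp (Apoly adj e lam) \<subseteq> (\<lambda>S u. \<Sum>m\<in>S. avec adj e lam m u) ` Pow (nodes adj)"
    using Apoly_exponent by blast
qed simp

definition nonneg_part :: "(('v \<Rightarrow> rat) \<Rightarrow> int) \<Rightarrow> 'v set \<Rightarrow> ('v \<Rightarrow> rat) \<Rightarrow> int" where
  "nonneg_part P K x = (if \<exists>n\<in>K. 0 \<le> x n then P x else 0)"

lemma gsupp_nonneg_part_subset: "gsupp (nonneg_part P K) \<subseteq> gsupp P"
  unfolding gsupp_def nonneg_part_def by auto

lemma in_tN_nonneg_part: "in_tN N P \<Longrightarrow> in_tN N (nonneg_part P K)"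
  using gsupp_nonneg_part_subset[of P K] unfolding in_tN_def by (auto intro: finite_subset)

lemma gsupp_nonneg_part: "x \<in> gsupp (nonneg_part P K) \<Longrightarrow> \<exists>n\<in>K. 0 \<le> x n"
  unfolding gsupp_def nonneg_part_def by (auto split: if_splits)

context
  fixes adj :: "'v::finite \<Rightarrow> 'v \<Rightarrow> bool" and e :: "'v \<Rightarrow> int" and lam :: "'v \<Rightarrow> rat"
  assumes avec_pos: "\<And>m n. m \<in> nodes adj \<Longrightarrow> n \<in> nodes adj \<Longrightarrow> avec adj e lam m n > 0"
begin

\<comment> \<open>Exponent of the leading monomial t^(a_1 + ... + a_k) of A, the bound in neg_deg.\<close>
abbreviation top_exp :: "'v \<Rightarrow> rat" where
  "top_exp \<equiv> \<lambda>u. \<Sum>m\<in>nodes adj. avec adj e lam m u"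

lemma sum_avec_le_top_exp:
  assumes "S \<subseteq> nodes adj" "n \<in> nodes adj"
  shows "(\<Sum>m\<in>S. avec adj e lam m n) \<le> top_exp n"
    and "(\<Sum>m\<in>S. avec adj e lam m n) = top_exp n \<Longrightarrow> S = nodes adj"
proof -
  have split: "top_exp n = (\<Sum>m\<in>S. avec adj e lam m n) + (\<Sum>m\<in>nodes adj - S. avec adj e lam m n)"
    using sum.subset_diff[OF assms(1)] by (simp add: add.commute)
  have "(\<Sum>m\<in>nodes adj - S. avec adj e lam m n) \<ge> 0"
    by (rule sum_nonneg) (use avec_pos assms(2) in \<open>auto intro: less_imp_le\<close>)
  then show "(\<Sum>m\<in>S. avec adj e lam m n) \<le> top_exp n" using split by simp
  assume "(\<Sum>m\<in>S. avec adj e lam m n) = top_exp n"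
  moreover have "nodes adj - S \<noteq> {} \<Longrightarrow> (\<Sum>m\<in>nodes adj - S. avec adj e lam m n) > 0"
    by (rule sum_pos) (use avec_pos assms(2) in auto)
  ultimately show "S = nodes adj" using split assms(1) by force
qed

lemma Apoly_exponent_le_top_exp:
  assumes "y \<in> gsupp (Apoly adj e lam)" "n \<in> nodes adj"
  shows "y n \<le> top_exp n" and "y n = top_exp n \<Longrightarrow> y = top_exp"
proof -
  obtain S where S: "S \<subseteq> nodes adj" "y = (\<lambda>u. \<Sum>m\<in>S. avec adj e lam m u)"
    using Apoly_exponent[OF assms(1)] .
  show "y n \<le> top_exp n" using sum_avec_le_top_exp(1)[OF S(1) assms(2)] S(2) by simp
  assume "y n = top_exp n"
  then show "y = top_exp" using sum_avec_le_top_exp(2)[OF S(1) assms(2)] S(2) by simp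
qed

lemma Apoly_top_exp: "Apoly adj e lam top_exp \<noteq> 0"
proof -
  have "S = nodes adj" if "S \<subseteq> nodes adj" "(\<lambda>u. \<Sum>m\<in>S. avec adj e lam m u) = top_exp" for S
  proof (cases "nodes adj = {}")
    case False
    then obtain n where "n \<in> nodes adj" by blast
    then show ?thesis using sum_avec_le_top_exp(2)[OF that(1)] that(2) by metis
  qed (use that in simp)
  then have "{S. S \<subseteq> nodes adj \<and> (\<lambda>u. \<Sum>m\<in>S. avec adj e lam m u) = top_exp} = {nodes adj}"
    by auto
  then show ?thesis unfolding Apoly_def by simp
qed

text \<open>If z maximises the t_n-exponent over the support of Q, the monomial
  t^(top_exp + z) of A Q arises only from the leading monomial t^top_exp of A.\<close>
lemma gmult_Apoly_nonzero_at_top: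
  assumes fin: "finite (gsupp Q)" and z0: "z0 \<in> gsupp Q" "0 \<le> z0 n" and n: "n \<in> nodes adj"
  obtains x where "top_exp n \<le> x n" "gmult (Apoly adj e lam) Q x \<noteq> 0"
proof -
  define M where "M = Max ((\<lambda>z. z n) ` gsupp Q)"
  have M_ge: "z' \<in> gsupp Q \<Longrightarrow> z' n \<le> M" for z' unfolding M_def using fin by auto
  have "M \<in> (\<lambda>z. z n) ` gsupp Q" unfolding M_def using fin z0(1) by (intro Max_in) auto
  then obtain z where z: "z \<in> gsupp Q" "z n = M" by blast
  define x where "x = (\<lambda>u. top_exp u + z u)"
  have others: "Apoly adj e lam y * Q (\<lambda>v. x v - y v) = 0"
    if "y \<in> gsupp (Apoly adj e lam) - {top_exp}" for y
  proof -
    have "y n < top_exp n" using Apoly_exponent_le_top_exp[of y n] that n by force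
    then have "(\<lambda>v. x v - y v) \<notin> gsupp Q" using M_ge z(2) unfolding x_def by force
    then show ?thesis unfolding gsupp_def by simp
  qed
  have top: "top_exp \<in> gsupp (Apoly adj e lam)" using Apoly_top_exp unfolding gsupp_def by simp
  have "gmult (Apoly adj e lam) Q x = Apoly adj e lam top_exp * Q z
      + (\<Sum>y\<in>gsupp (Apoly adj e lam) - {top_exp}. Apoly adj e lam y * Q (\<lambda>v. x v - y v))"
    unfolding gmult_def x_def by (simp add: sum.remove[OF finite_gsupp_Apoly top])
  also have "(\<Sum>y\<in>gsupp (Apoly adj e lam) - {top_exp}. Apoly adj e lam y * Q (\<lambda>v. x v - y v)) = 0"
    by (rule sum.neutral) (use others in blast)
  finally have "gmult (Apoly adj e lam) Q x = Apoly adj e lam top_exp * Q z" by simp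
  then have "gmult (Apoly adj e lam) Q x \<noteq> 0"
    using Apoly_top_exp z(1) unfolding gsupp_def by simp
  moreover have "top_exp n \<le> x n" using M_ge[OF z0(1)] z0(2) z(2) unfolding x_def by simp
  ultimately show thesis using that by blast
qed

text \<open>P and its nonnegative part differ only by monomials with negative t_n-exponent,
  and multiplying them by A keeps the t_n-exponent below that of the leading monomial.\<close>
lemma neg_deg_nonneg_part:
  assumes P_neg: "neg_deg adj e lam (num_minus adj e lam R P) n" and "n \<in> K" "n \<in> nodes adj"
  shows "neg_deg adj e lam (num_minus adj e lam R (nonneg_part P K)) n"
  unfolding neg_deg_def
proof (rule ballI, rule ccontr)
  fix x assume x: "x \<in> gsupp (num_minus adj e lam R (nonneg_part P K))" "\<not> x n < top_exp n"
  have "gmult (Apoly adj e lam) (\<lambda>z. P z - nonneg_part P K z) x = 0"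
    unfolding gmult_def
  proof (rule sum.neutral, rule ballI)
    fix y assume "y \<in> gsupp (Apoly adj e lam)"
    then have "0 \<le> x n - y n" using Apoly_exponent_le_top_exp(1)[of y n] x(2) \<open>n \<in> nodes adj\<close> by simp
    then show "Apoly adj e lam y * (P (\<lambda>v. x v - y v) - nonneg_part P K (\<lambda>v. x v - y v)) = 0"
      unfolding nonneg_part_def using \<open>n \<in> K\<close> by auto
  qed
  moreover have "num_minus adj e lam R P x = 0"
    using neg_deg_coeff_eq_0[where x=x, OF P_neg] x(2) by simp
  ultimately have "num_minus adj e lam R (nonneg_part P K) x = 0"
    unfolding num_minus_def using gmult_diff[of "Apoly adj e lam" P x "nonneg_part P K"] by simp
  then show False using x(1) unfolding gsupp_def by simp
qed

lemma nonneg_part_unique: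
  assumes P_neg: "\<forall>n\<in>K. neg_deg adj e lam (num_minus adj e lam R P) n"
    and K: "K \<subseteq> nodes adj" and P: "in_tN (nodes adj) P"
    and Q: "in_tN (nodes adj) Q" "\<forall>x\<in>gsupp Q. \<exists>n\<in>K. 0 \<le> x n"
      "\<forall>n\<in>K. neg_deg adj e lam (num_minus adj e lam R Q) n"
  shows "Q = nonneg_part P K"
proof (rule ccontr)
  assume "Q \<noteq> nonneg_part P K"
  define D where "D = (\<lambda>z. Q z - nonneg_part P K z)"
  obtain z0 where "Q z0 \<noteq> nonneg_part P K z0"
    using \<open>Q \<noteq> nonneg_part P K\<close> by (auto simp: fun_eq_iff)
  then have z0: "z0 \<in> gsupp D" unfolding D_def gsupp_def by simp
  have supp: "gsupp D \<subseteq> gsupp Q \<union> gsupp (nonneg_part P K)" unfolding D_def gsupp_def by auto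
  have fin: "finite (gsupp D)"
    using finite_subset[OF supp] Q(1) in_tN_nonneg_part[OF P] unfolding in_tN_def by blast
  have "z0 \<in> gsupp Q \<or> z0 \<in> gsupp (nonneg_part P K)" using supp z0 by blast
  then obtain n where n: "n \<in> K" "0 \<le> z0 n"
    using Q(2) gsupp_nonneg_part[of z0 P K] by blast
  have n_node: "n \<in> nodes adj" using n(1) K by blast
  obtain x where x: "top_exp n \<le> x n" "gmult (Apoly adj e lam) D x \<noteq> 0"
    using gmult_Apoly_nonzero_at_top[OF fin z0 n(2) n_node] .
  have "num_minus adj e lam R Q x = 0"
    using neg_deg_coeff_eq_0[where x=x, OF Q(3)[rule_format, OF n(1)] x(1)] .
  moreover have "num_minus adj e lam R (nonneg_part P K) x = 0"
    using neg_deg_coeff_eq_0[where x=x,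
        OF neg_deg_nonneg_part[OF P_neg[rule_format, OF n(1)] n(1) n_node] x(1)] .
  ultimately show False
    using x(2) gmult_diff[of "Apoly adj e lam" Q x "nonneg_part P K"]
    unfolding D_def num_minus_def by simp
qed

lemma Pedge_eq_nonneg_part:
  assumes P: "in_tN (nodes adj) P"
    and P_neg: "\<forall>n\<in>nodes adj. neg_deg adj e lam (num_minus adj e lam R P) n"
    and K: "K \<subseteq> nodes adj"
  shows "Pedge adj e lam R K = nonneg_part P K"
  unfolding Pedge_def
proof (rule the_equality)
  have "\<forall>n\<in>K. neg_deg adj e lam (num_minus adj e lam R (nonneg_part P K)) n"
    using neg_deg_nonneg_part P_neg K by blast
  then show "in_tN (nodes adj) (nonneg_part P K) \<and> (\<forall>x\<in>gsupp (nonneg_part P K). \<exists>n\<in>K. 0 \<le> x n)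
      \<and> (\<forall>n\<in>K. neg_deg adj e lam (num_minus adj e lam R (nonneg_part P K)) n)"
    using in_tN_nonneg_part[OF P] gsupp_nonneg_part by blast
next
  fix Q assume "in_tN (nodes adj) Q \<and> (\<forall>x\<in>gsupp Q. \<exists>n\<in>K. 0 \<le> x n)
      \<and> (\<forall>n\<in>K. neg_deg adj e lam (num_minus adj e lam R Q) n)"
  then show "Q = nonneg_part P K"
    using nonneg_part_unique[of K R P Q] P_neg K P by blast
qed

lemma Pn_eq_nonneg_part:
  assumes "in_tN (nodes adj) P" "\<forall>n\<in>nodes adj. neg_deg adj e lam (num_minus adj e lam R P) n"
    and "n \<in> nodes adj"
  shows "Pn adj e lam R n = nonneg_part P {n}"
  using Pedge_eq_nonneg_part[OF assms(1,2), of "{n}"] assms(3)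
  unfolding Pn_def Pedge_def by simp

end

theorem mainTheorem2:
  fixes adj :: "'v::finite \<Rightarrow> 'v \<Rightarrow> bool"
    and e :: "'v \<Rightarrow> int"
    and h0 :: "'v \<Rightarrow> rat"
    and lam :: "'v \<Rightarrow> rat"
    and n0 :: 'v
    and R Pplus :: "('v \<Rightarrow> rat) \<Rightarrow> int"
  assumes tree: "is_tree adj"
    and negdef: "neg_definite (inter_mat adj e)"
    and nodes_ne: "nodes adj \<noteq> {}"
    and h0: "in_Ldual (inter_mat adj e) h0"
    and lam_pos: "\<forall>n\<in>nodes adj. lam n > 0"
    and R_fin: "finite (gsupp R)"
    and R_num: "\<forall>x. R x = gmult (Apoly adj e lam) (Zred adj e h0) x"
    and Pplus_poly: "in_tN (nodes adj) Pplus"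
    and Pplus_exps: "\<forall>\<beta>\<in>gsupp Pplus. \<not> (\<forall>n\<in>nodes adj. \<beta> n < 0)"
    and Pplus_neg: "\<forall>n\<in>nodes adj. neg_deg adj e lam (num_minus adj e lam R Pplus) n"
    and n0: "n0 \<in> nodes adj"
  shows "\<forall>\<beta>. Ppart adj e lam R \<beta> = mult_s adj n0 \<beta> * Pplus \<beta>"
proof
  fix \<beta> :: "'v \<Rightarrow> rat"
  interpret node_rooted_tree adj n0 using tree n0 by unfold_locales
  note pos = avec_pos[OF tree negdef lam_pos]
  define ind where "ind n = (if 0 \<le> \<beta> n then 1 else 0 :: int)" for n
  have "Pn adj e lam R n \<beta> = ind n * Pplus \<beta>" if "n \<in> nodes adj" for n
    using Pn_eq_nonneg_part[OF pos Pplus_poly Pplus_neg that] by (simp add: nonneg_part_def ind_def)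
  moreover have "Pedge adj e lam R ed \<beta> = (if \<exists>n\<in>ed. 0 \<le> \<beta> n then 1 else 0) * Pplus \<beta>"
    if "ed \<in> orb_edges adj" for ed
    using that Pedge_eq_nonneg_part[OF pos Pplus_poly Pplus_neg, of ed] orb_parent_node
    by (auto simp: orb_edges_eq nonneg_part_def)
  ultimately have "Ppart adj e lam R \<beta>
      = ((\<Sum>ed\<in>orb_edges adj. if \<exists>n\<in>ed. 0 \<le> \<beta> n then 1 else 0)
        - (\<Sum>n\<in>nodes adj. (int (orb_valency adj n) - 1) * ind n)) * Pplus \<beta>"
    unfolding Ppart_def by (simp add: sum_distrib_right left_diff_distrib mult.assoc)
  then show "Ppart adj e lam R \<beta> = mult_s adj n0 \<beta> * Pplus \<beta>"
    using mult_s_eq_edge_count[of \<beta>] unfolding ind_def by simp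
qed

end
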